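(* In the setting described in the context (with $Q$ possibly infinite-dimensional and $\Omega$ admissible), for $\tau\in L$ let $k^{\mathrm{S}}_\tau:Q\to\mathbb{C}$ be $$k^{\mathrm{S}}_\tau(\phi)=\exp\Big(\Omega(q(\tau),\phi)+\mathrm{i}[\tau,\phi]-\tfrac12\Omega(q(\tau),q(\tau))-\tfrac{\mathrm{i}}{2}[\tau,\tau]\Big),$$ and regard it (by its canonical extension) as a continuous function on $\hat{Q}$. Then the linear span of $\{k^{\mathrm{S}}_\tau:\tau\in L\}$ is dense in $\mathrm{L}^2(\hat{Q},\nu_Q)$.
   Context: $L$ is a real vector space and $[\cdot,\cdot]:L\times L\to\mathbb{R}$ is bilinear such that $\omega(\xi,\xi')=\frac12[\xi,\xi']-\frac12[\xi',\xi]$ is non-degenerate. $M=\{\tau\in L:[\xi,\tau]=0\ \forall\xi\in L\}$, $N=\{\tau\in L:[\tau,\xi]=0\ \forall\xi\in L\}$, and $L=M\oplus N$ is assumed. $Q=L/M$ with quotient map $q$; $[\cdot,\cdot]$ descends to $L\times Q\to\mathbb{R}$. $\Omega:Q\times Q\to\mathbb{C}$ is a symmetric bilinear form with positive definite real part which is admissible: $Q$ with inner product $\Re\Omega$ is a separable real Hilbert space, $\Im\Omega$ is continuous, for every $\xi\in L$ the map $\phi\mapsto[\xi,\phi]$ is continuous on $Q$, and every continuous linear map $Q\to\mathbb{R}$ is of the form $\phi\mapsto[\xi,\phi]$ for some $\xi\in L$. $\hat{Q}$ denotes the algebraic dual of the topological dual $Q^*$ of $Q$, with the canonical inclusion $Q\hookrightarrow\hat{Q}$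 and the initial topology making all evaluations $\hat{Q}\ni x\mapsto x(\ell)$, $\ell\in Q^*$, continuous. $\nu_Q$ is the Gaussian probability measure on $\hat{Q}$ determined by $\int_{\hat{Q}}\exp(\mathrm{i}\,x(\ell))\,\mathrm{d}\nu_Q(x)=\exp(-\frac14\|\ell\|^2)$ for all $\ell\in Q^*$ (equivalently, its pushforward to every finite-dimensional quotient of $Q$ is the Gaussian measure with density proportional to $\exp(-\Re\Omega(\phi,\phi))$ in the quotient norm). A continuous function on $Q$ that is invariant under translations by a closed subspace $W$ of finite codimension factors through the finite-dimensional space $Q/W$, which is also a quotient of $\hat{Q}$; this gives its canonical extension to a continuous function on $\hat{Q}$. Each $k^{\mathrm{S}}_\tau$ is of this type. *)

theory Defs
  imports "HOL-Analysis.Analysis" "HOL-Probability.Probability"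
begin

definition omegaF :: "('l \<Rightarrow> 'l \<Rightarrow> real) \<Rightarrow> 'l \<Rightarrow> 'l \<Rightarrow> real" where
  "omegaF br \<xi> \<xi>' = (1/2) * br \<xi> \<xi>' - (1/2) * br \<xi>' \<xi>"

definition Mspace :: "('l \<Rightarrow> 'l \<Rightarrow> real) \<Rightarrow> 'l set" where
  "Mspace br = {\<tau>. \<forall>\<xi>. br \<xi> \<tau> = 0}"

definition Nspace :: "('l \<Rightarrow> 'l \<Rightarrow> real) \<Rightarrow> 'l set" where
  "Nspace br = {\<tau>. \<forall>\<xi>. br \<tau> \<xi> = 0}"

text \<open>The descended pairing L x Q -> R, [xi, phi] = [xi, tau] for any tau with q tau = phi.\<close>
definition brQ :: "('l \<Rightarrow> 'l \<Rightarrow> real) \<Rightarrow> ('l \<Rightarrow> 'q) \<Rightarrow> 'l \<Rightarrow> 'q \<Rightarrow> real" where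
  "brQ br q \<xi> \<phi> = br \<xi> (SOME \<tau>. q \<tau> = \<phi>)"

definition Qstar :: "('q::real_normed_vector \<Rightarrow> real) set" where
  "Qstar = {l. bounded_linear l}"

text \<open>Algebraic dual of Q* (functions extended by 0 outside Q*, so that this set is in
  bijection with the algebraic dual).\<close>
definition Qhat :: "(('q::real_normed_vector \<Rightarrow> real) \<Rightarrow> real) set" where
  "Qhat = {x. (\<forall>l1\<in>Qstar. \<forall>l2\<in>Qstar. x (\<lambda>\<phi>. l1 \<phi> + l2 \<phi>) = x l1 + x l2)
            \<and> (\<forall>c. \<forall>l\<in>Qstar. x (\<lambda>\<phi>. c * l \<phi>) = c * x l)
            \<and> (\<forall>l. l \<notin> Qstar \<longrightarrow> x l = 0)}"

definition Qhat_sets :: "(('q::real_normed_vector \<Rightarrow> real) \<Rightarrow> real) set set" where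
  "Qhat_sets = sigma_sets Qhat
     (\<Union>l\<in>Qstar. {{x \<in> Qhat. x l \<in> B} | B. B \<in> sets borel})"

definition closed_fin_codim :: "'q::real_normed_vector set \<Rightarrow> bool" where
  "closed_fin_codim W \<longleftrightarrow> subspace W \<and> closed W \<and> (\<exists>B. finite B \<and> span (W \<union> B) = UNIV)"

definition transl_invariant :: "('q::real_normed_vector \<Rightarrow> 'b) \<Rightarrow> 'q set \<Rightarrow> bool" where
  "transl_invariant f W \<longleftrightarrow> (\<forall>\<phi> w. w \<in> W \<longrightarrow> f (\<phi> + w) = f \<phi>)"

text \<open>Canonical extension to Qhat of a function on Q that is invariant under translations
  by a closed subspace W of finite codimension: it factors through Q/W, and Q/W is a quotient
  of Qhat via x |-> (the phi in Q, unique mod W, with l phi = x l for all l in Q* annihilating W).\<close>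
definition canon_ext :: "('q::real_normed_vector \<Rightarrow> 'b) \<Rightarrow> (('q \<Rightarrow> real) \<Rightarrow> real) \<Rightarrow> 'b" where
  "canon_ext f x =
     (let W = (SOME W. closed_fin_codim W \<and> transl_invariant f W)
      in f (SOME \<phi>. \<forall>l\<in>Qstar. (\<forall>w\<in>W. l w = 0) \<longrightarrow> l \<phi> = x l))"

definition kS :: "('l \<Rightarrow> 'l \<Rightarrow> real) \<Rightarrow> ('l \<Rightarrow> 'q) \<Rightarrow> ('q \<Rightarrow> 'q \<Rightarrow> complex) \<Rightarrow> 'l \<Rightarrow> 'q \<Rightarrow> complex" where
  "kS br q \<Omega> \<tau> \<phi> = exp (\<Omega> (q \<tau>) \<phi> + \<i> * complex_of_real (brQ br q \<tau> \<phi>)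
        - (1/2) * \<Omega> (q \<tau>) (q \<tau>) - (\<i>/2) * complex_of_real (br \<tau> \<tau>))"

end

theory Submission
  imports Defs
begin

text \<open>For \<open>m \<in> M\<close> we have \<open>q m = 0\<close> and \<open>[m, m] = 0\<close>, so \<open>k\<^sup>S\<^sub>m = exp (i [m, \<cdot>])\<close> is a
  character of \<open>Q\<close>. As \<open>[n, \<cdot>] = 0\<close> for \<open>n \<in> N\<close> and \<open>L = M \<oplus> N\<close>, every continuous
  functional \<open>\<ell>\<close> on \<open>Q\<close> arises this way, and the canonical extension of \<open>exp (i \<ell>)\<close> to the
  algebraic dual of \<open>Q\<^sup>*\<close> is \<open>x \<mapsto> exp (i x(\<ell>))\<close>. So it suffices that trigonometric polynomials
  in the coordinates \<open>x(\<ell>)\<close> are dense in \<open>L\<^sup>2\<close> of any finite measure on the cylinder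
  \<open>\<sigma>\<close>-algebra. Weierstrass approximation in the variable \<open>sin (\<pi> t / 2n)\<close> gives uniformly
  bounded trigonometric polynomials converging pointwise to the indicator of a half-line;
  their products reach the indicators of finite intersections of half-spaces, an
  \<open>\<inter>\<close>-stable generator of the cylinder \<open>\<sigma>\<close>-algebra, so a Dynkin argument and approximation by
  simple functions reach all of \<open>L\<^sup>2\<close>.\<close>

section \<open>Approximation in \<open>L\<^sup>2\<close>\<close>

definition square_integrable :: "'a measure \<Rightarrow> ('a \<Rightarrow> complex) \<Rightarrow> bool" where
  "square_integrable M f \<longleftrightarrow> f \<in> borel_measurable M \<and> integrable M (\<lambda>x. (cmod (f x))\<^sup>2)"

lemma norm_add_squared_le:
  fixes a b :: "'a::real_normed_vector"
  shows "(norm (a + b))\<^sup>2 \<le> 2 * (norm a)\<^sup>2 + 2 * (norm b)\<^sup>2"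
proof -
  have "(norm (a + b))\<^sup>2 \<le> (norm a + norm b)\<^sup>2"
    using power_mono[OF norm_triangle_ineq norm_ge_zero] .
  also have "\<dots> \<le> 2 * (norm a)\<^sup>2 + 2 * (norm b)\<^sup>2"
    using zero_le_power2[of "norm a - norm b"] by (simp add: power2_sum power2_diff)
  finally show ?thesis .
qed

lemma square_integrable_add:
  assumes "square_integrable M f" "square_integrable M g"
  shows "square_integrable M (\<lambda>x. f x + g x)"
  unfolding square_integrable_def
proof
  show "(\<lambda>x. f x + g x) \<in> borel_measurable M"
    using assms unfolding square_integrable_def by auto
  show "integrable M (\<lambda>x. (cmod (f x + g x))\<^sup>2)"
  proof (rule Bochner_Integration.integrable_bound)
    show "integrable M (\<lambda>x. 2 * (cmod (f x))\<^sup>2 + 2 * (cmod (g x))\<^sup>2)"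
      using assms unfolding square_integrable_def by auto
    show "(\<lambda>x. (cmod (f x + g x))\<^sup>2) \<in> borel_measurable M"
      using assms unfolding square_integrable_def by auto
    show "AE x in M. norm ((cmod (f x + g x))\<^sup>2) \<le> norm (2 * (cmod (f x))\<^sup>2 + 2 * (cmod (g x))\<^sup>2)"
      using norm_add_squared_le by (auto intro!: AE_I2)
  qed
qed

lemma square_integrable_mult_left:
  "square_integrable M f \<Longrightarrow> square_integrable M (\<lambda>x. c * f x)"
  unfolding square_integrable_def by (auto simp: norm_mult power_mult_distrib)

lemma square_integrable_diff:
  assumes "square_integrable M f" "square_integrable M g"
  shows "square_integrable M (\<lambda>x. f x - g x)"
  using square_integrable_add[OF assms(1) square_integrable_mult_left[OF assms(2), of "-1"]] by simp

lemma square_integrable_cong: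
  assumes "square_integrable M f" "\<And>x. x \<in> space M \<Longrightarrow> f x = g x"
  shows "square_integrable M g"
  using assms measurable_cong[of M f g] Bochner_Integration.integrable_cong[OF refl, of M "\<lambda>x. (cmod (f x))\<^sup>2"]
  unfolding square_integrable_def by auto

lemma (in finite_measure) square_integrable_bounded:
  assumes "f \<in> borel_measurable M" "\<And>x. x \<in> space M \<Longrightarrow> cmod (f x) \<le> C"
  shows "square_integrable M f"
  unfolding square_integrable_def
proof
  show "integrable M (\<lambda>x. (cmod (f x))\<^sup>2)"
  proof (rule Bochner_Integration.integrable_bound)
    show "integrable M (\<lambda>x. C\<^sup>2)" by simp
    show "AE x in M. norm ((cmod (f x))\<^sup>2) \<le> norm (C\<^sup>2)"
      using assms(2) by (auto intro!: AE_I2 power_mono simp: abs_le_square_iff)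
  qed (use assms(1) in simp)
qed fact

lemma integral_norm_add_squared_le:
  assumes "square_integrable M u" "square_integrable M v"
  shows "(\<integral>x. (cmod (u x + v x))\<^sup>2 \<partial>M)
           \<le> 2 * (\<integral>x. (cmod (u x))\<^sup>2 \<partial>M) + 2 * (\<integral>x. (cmod (v x))\<^sup>2 \<partial>M)"
proof -
  have "(\<integral>x. (cmod (u x + v x))\<^sup>2 \<partial>M) \<le> (\<integral>x. 2 * (cmod (u x))\<^sup>2 + 2 * (cmod (v x))\<^sup>2 \<partial>M)"
    using assms square_integrable_add[OF assms] norm_add_squared_le
    by (intro integral_mono) (auto simp: square_integrable_def)
  also have "\<dots> = 2 * (\<integral>x. (cmod (u x))\<^sup>2 \<partial>M) + 2 * (\<integral>x. (cmod (v x))\<^sup>2 \<partial>M)"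
    using assms by (simp add: square_integrable_def)
  finally show ?thesis .
qed

lemma disjoint_family_indicator_partial_sums:
  assumes "disjoint_family A"
  shows "(\<lambda>n. \<Sum>i<n. indicator (A i) x :: complex) \<longlonglongrightarrow> indicator (\<Union>i. A i) x"
    and "cmod (\<Sum>i<n. indicator (A i) x :: complex) \<le> 1"
proof -
  have "\<And>i j. i \<noteq> j \<Longrightarrow> A i \<inter> A j = {}"
    using assms by (auto simp: disjoint_family_on_def)
  note real_sums = indicator_sums[OF this, where x=x]
  have "(\<lambda>i. indicator (A i) x :: complex) sums indicator (\<Union>i. A i) x"
    using sums_of_real[OF real_sums] by (simp add: of_real_indicator)
  then show "(\<lambda>n. \<Sum>i<n. indicator (A i) x :: complex) \<longlonglongrightarrow> indicator (\<Union>i. A i) x"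
    by (simp add: sums_def)
  have "(\<Sum>i<n. indicator (A i) x :: real) \<le> indicator (\<Union>i. A i) x"
    using sum_le_suminf[OF sums_summable[OF real_sums], where I="{..<n}"] sums_unique[OF real_sums]
    by simp
  moreover have "indicator (\<Union>i. A i) x \<le> (1::real)" "0 \<le> (\<Sum>i<n. indicator (A i) x :: real)"
    by (simp_all add: sum_nonneg)
  ultimately have "\<bar>\<Sum>i<n. indicator (A i) x :: real\<bar> \<le> 1" by linarith
  moreover have "(\<Sum>i<n. indicator (A i) x :: complex) = of_real (\<Sum>i<n. indicator (A i) x)"
    by (simp add: of_real_indicator)
  ultimately show "cmod (\<Sum>i<n. indicator (A i) x :: complex) \<le> 1" by (simp only: norm_of_real)
qed

locale L2_approximation = finite_measure M for M :: "'a measure" +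
  fixes T :: "('a \<Rightarrow> complex) set"
  assumes square_integrable_T: "P \<in> T \<Longrightarrow> square_integrable M P"
    and T_add: "P \<in> T \<Longrightarrow> Q \<in> T \<Longrightarrow> (\<lambda>x. P x + Q x) \<in> T"
    and T_mult_left: "P \<in> T \<Longrightarrow> (\<lambda>x. c * P x) \<in> T"
    and T_const: "(\<lambda>x. c) \<in> T"
begin

definition approximable :: "('a \<Rightarrow> complex) \<Rightarrow> bool" where
  "approximable f \<longleftrightarrow>
     square_integrable M f \<and> (\<forall>\<epsilon>>0. \<exists>P\<in>T. (\<integral>x. (cmod (f x - P x))\<^sup>2 \<partial>M) < \<epsilon>)"

lemma approximableI:
  "square_integrable M f \<Longrightarrow> (\<And>\<epsilon>. \<epsilon> > 0 \<Longrightarrow> \<exists>P\<in>T. (\<integral>x. (cmod (f x - P x))\<^sup>2 \<partial>M) < \<epsilon>)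
     \<Longrightarrow> approximable f"
  unfolding approximable_def by simp

lemma approximable_imp_square_integrable: "approximable f \<Longrightarrow> square_integrable M f"
  unfolding approximable_def by simp

lemma approximableE:
  assumes "approximable f" "\<epsilon> > 0"
  obtains P where "P \<in> T" "(\<integral>x. (cmod (f x - P x))\<^sup>2 \<partial>M) < \<epsilon>"
  using assms unfolding approximable_def by auto

lemma approximable_T: "P \<in> T \<Longrightarrow> approximable P"
  by (rule approximableI[OF square_integrable_T]) (auto intro!: bexI[of _ P])

lemma approximable_const: "approximable (\<lambda>x. c)"
  by (rule approximable_T[OF T_const])

lemma approximable_add:
  assumes "approximable f" "approximable g"
  shows "approximable (\<lambda>x. f x + g x)"
proof (rule approximableI)
  have f: "square_integrable M f" and g: "square_integrable M g"
    using assms by (simp_all add: approximable_imp_square_integrable)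
  show "square_integrable M (\<lambda>x. f x + g x)" using square_integrable_add[OF f g] .
  fix \<epsilon> :: real assume "\<epsilon> > 0"
  then have "\<epsilon>/4 > 0" by simp
  obtain P where P: "P \<in> T" "(\<integral>x. (cmod (f x - P x))\<^sup>2 \<partial>M) < \<epsilon>/4"
    using approximableE[OF assms(1) \<open>\<epsilon>/4 > 0\<close>] .
  obtain Q where Q: "Q \<in> T" "(\<integral>x. (cmod (g x - Q x))\<^sup>2 \<partial>M) < \<epsilon>/4"
    using approximableE[OF assms(2) \<open>\<epsilon>/4 > 0\<close>] .
  have "(\<integral>x. (cmod (f x + g x - (P x + Q x)))\<^sup>2 \<partial>M)
          = (\<integral>x. (cmod ((f x - P x) + (g x - Q x)))\<^sup>2 \<partial>M)"
    by (simp add: algebra_simps)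
  also have "\<dots> \<le> 2 * (\<integral>x. (cmod (f x - P x))\<^sup>2 \<partial>M) + 2 * (\<integral>x. (cmod (g x - Q x))\<^sup>2 \<partial>M)"
    by (intro integral_norm_add_squared_le square_integrable_diff f g square_integrable_T P Q)
  also have "\<dots> < \<epsilon>" using P Q by simp
  finally show "\<exists>R\<in>T. (\<integral>x. (cmod (f x + g x - R x))\<^sup>2 \<partial>M) < \<epsilon>"
    by (rule bexI[of _ "\<lambda>x. P x + Q x", OF _ T_add[OF P(1) Q(1)]])
qed

lemma approximable_mult_left:
  assumes "approximable f"
  shows "approximable (\<lambda>x. c * f x)"
proof (rule approximableI)
  show "square_integrable M (\<lambda>x. c * f x)"
    using square_integrable_mult_left[OF approximable_imp_square_integrable[OF assms]] .
  fix \<epsilon> :: real assume e: "\<epsilon> > 0"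
  have d: "\<epsilon> / ((cmod c)\<^sup>2 + 1) > 0" using e by (simp add: add_nonneg_pos)
  obtain P where P: "P \<in> T" "(\<integral>x. (cmod (f x - P x))\<^sup>2 \<partial>M) < \<epsilon> / ((cmod c)\<^sup>2 + 1)"
    using approximableE[OF assms d] .
  have "(\<integral>x. (cmod (c * f x - c * P x))\<^sup>2 \<partial>M) = (cmod c)\<^sup>2 * (\<integral>x. (cmod (f x - P x))\<^sup>2 \<partial>M)"
    by (simp add: right_diff_distrib[symmetric] norm_mult power_mult_distrib del: right_diff_distrib)
  also have "\<dots> \<le> ((cmod c)\<^sup>2 + 1) * (\<integral>x. (cmod (f x - P x))\<^sup>2 \<partial>M)"
    by (intro mult_right_mono) auto
  also have "\<dots> < \<epsilon>"
    using P(2) d pos_less_divide_eq[of "(cmod c)\<^sup>2 + 1"] by (simp add: add_nonneg_pos mult.commute)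
  finally have "(\<integral>x. (cmod (c * f x - c * P x))\<^sup>2 \<partial>M) < \<epsilon>" .
  then show "\<exists>R\<in>T. (\<integral>x. (cmod (c * f x - R x))\<^sup>2 \<partial>M) < \<epsilon>"
    by (rule bexI[of _ "\<lambda>x. c * P x", OF _ T_mult_left[OF P(1)]])
qed

lemma approximable_sum:
  "finite I \<Longrightarrow> (\<And>i. i \<in> I \<Longrightarrow> approximable (g i)) \<Longrightarrow> approximable (\<lambda>x. \<Sum>i\<in>I. g i x)"
  by (induction I rule: finite_induct) (auto intro: approximable_add approximable_const[of 0, simplified])

lemma approximable_cong:
  assumes "approximable f" "\<And>x. x \<in> space M \<Longrightarrow> f x = g x"
  shows "approximable g"
proof (rule approximableI)
  show "square_integrable M g"
    using square_integrable_cong[OF approximable_imp_square_integrable] assms .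
  fix \<epsilon> :: real assume "\<epsilon> > 0"
  then obtain P where P: "P \<in> T" "(\<integral>x. (cmod (f x - P x))\<^sup>2 \<partial>M) < \<epsilon>"
    using approximableE[OF assms(1)] by blast
  moreover have "(\<integral>x. (cmod (g x - P x))\<^sup>2 \<partial>M) = (\<integral>x. (cmod (f x - P x))\<^sup>2 \<partial>M)"
    using assms(2) by (intro Bochner_Integration.integral_cong) auto
  ultimately show "\<exists>P\<in>T. (\<integral>x. (cmod (g x - P x))\<^sup>2 \<partial>M) < \<epsilon>"
    by (metis (no_types, lifting))
qed

lemma approximable_limit:
  assumes f: "square_integrable M f" and g: "\<And>n. approximable (g n)"
    and lim: "(\<lambda>n. \<integral>x. (cmod (f x - g n x))\<^sup>2 \<partial>M) \<longlonglongrightarrow> 0"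
  shows "approximable f"
proof (rule approximableI[OF f])
  fix \<epsilon> :: real assume e: "\<epsilon> > 0"
  then obtain n where n: "\<bar>\<integral>x. (cmod (f x - g n x))\<^sup>2 \<partial>M\<bar> < \<epsilon>/4"
    using LIMSEQ_D[OF lim, of "\<epsilon>/4"] by auto
  obtain P where P: "P \<in> T" "(\<integral>x. (cmod (g n x - P x))\<^sup>2 \<partial>M) < \<epsilon>/4"
    using approximableE[OF g, of "\<epsilon>/4"] e by auto
  have "(\<integral>x. (cmod (f x - P x))\<^sup>2 \<partial>M) = (\<integral>x. (cmod ((f x - g n x) + (g n x - P x)))\<^sup>2 \<partial>M)"
    by simp
  also have "\<dots> \<le> 2 * (\<integral>x. (cmod (f x - g n x))\<^sup>2 \<partial>M) + 2 * (\<integral>x. (cmod (g n x - P x))\<^sup>2 \<partial>M)"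
    by (intro integral_norm_add_squared_le square_integrable_diff f
        approximable_imp_square_integrable[OF g] square_integrable_T P(1))
  also have "\<dots> < \<epsilon>" using n P by linarith
  finally show "\<exists>P\<in>T. (\<integral>x. (cmod (f x - P x))\<^sup>2 \<partial>M) < \<epsilon>" using P by blast
qed

lemma approximable_dominated_limit:
  assumes f: "square_integrable M f" and g: "\<And>n. approximable (g n)"
    and lim: "\<And>x. x \<in> space M \<Longrightarrow> (\<lambda>n. g n x) \<longlonglongrightarrow> f x"
    and w: "integrable M w" and bound: "\<And>n x. x \<in> space M \<Longrightarrow> (cmod (f x - g n x))\<^sup>2 \<le> w x"
  shows "approximable f"
proof (rule approximable_limit[OF f g])
  have "(\<lambda>n. \<integral>x. (cmod (f x - g n x))\<^sup>2 \<partial>M) \<longlonglongrightarrow> (\<integral>x. 0 \<partial>M)"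
  proof (rule integral_dominated_convergence[OF _ _ w])
    show "(\<lambda>x. (cmod (f x - g n x))\<^sup>2) \<in> borel_measurable M" for n
      using approximable_imp_square_integrable[OF g[of n]] f unfolding square_integrable_def by auto
    show "AE x in M. (\<lambda>n. (cmod (f x - g n x))\<^sup>2) \<longlonglongrightarrow> 0"
    proof (rule AE_I2)
      fix x assume "x \<in> space M"
      then have "(\<lambda>n. f x - g n x) \<longlonglongrightarrow> 0"
        using tendsto_diff[OF tendsto_const[of "f x"] lim[of x]] by simp
      then show "(\<lambda>n. (cmod (f x - g n x))\<^sup>2) \<longlonglongrightarrow> 0"
        using tendsto_power[OF tendsto_norm_zero, of _ _ 2] by fastforce
    qed
    show "AE x in M. norm ((cmod (f x - g n x))\<^sup>2) \<le> w x" for n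
      using bound by (auto intro!: AE_I2)
  qed simp
  then show "(\<lambda>n. \<integral>x. (cmod (f x - g n x))\<^sup>2 \<partial>M) \<longlonglongrightarrow> 0" by simp
qed

lemma approximable_bounded_limit:
  assumes f: "f \<in> borel_measurable M" and g: "\<And>n. approximable (g n)"
    and lim: "\<And>x. x \<in> space M \<Longrightarrow> (\<lambda>n. g n x) \<longlonglongrightarrow> f x"
    and bound: "\<And>n x. x \<in> space M \<Longrightarrow> cmod (g n x) \<le> C"
  shows "approximable f"
proof -
  have f_bound: "cmod (f x) \<le> C" if x: "x \<in> space M" for x
    by (rule tendsto_upperbound[OF tendsto_norm[OF lim[OF x]]]) (use bound x in auto)
  have "square_integrable M f"
    using square_integrable_bounded[OF f f_bound] by blast
  then show ?thesis
  proof (rule approximable_dominated_limit[OF _ g lim, where w="\<lambda>x. (2 * C)\<^sup>2"])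
    fix n x assume x: "x \<in> space M"
    have "cmod (f x - g n x) \<le> 2 * C"
      using norm_triangle_ineq4[of "f x" "g n x"] f_bound[OF x] bound[OF x, of n] by linarith
    then show "(cmod (f x - g n x))\<^sup>2 \<le> (2 * C)\<^sup>2"
      by (rule power_mono) simp
  qed (assumption, rule integrable_const)
qed

lemma approximable_simple_function:
  assumes indicator: "\<And>A. A \<in> sets M \<Longrightarrow> approximable (indicator A)"
    and s: "simple_function M s"
  shows "approximable s"
proof -
  have "approximable (\<lambda>x. \<Sum>y \<in> s ` space M. y * indicator (s -` {y} \<inter> space M) x)"
    using s by (intro approximable_sum approximable_mult_left indicator)
      (auto simp: simple_function_def)
  moreover have "(\<Sum>y \<in> s ` space M. y * indicator (s -` {y} \<inter> space M) x) = s x"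
    if "x \<in> space M" for x
  proof -
    have "s x = (\<Sum>y \<in> s ` space M. indicator (s -` {y} \<inter> space M) x *\<^sub>R y)"
      by (rule simple_function_indicator_representation_banach[OF s that])
    also have "\<dots> = (\<Sum>y \<in> s ` space M. y * indicator (s -` {y} \<inter> space M) x)"
      by (intro sum.cong refl) (simp split: split_indicator)
    finally show ?thesis by (rule sym)
  qed
  ultimately show ?thesis by (rule approximable_cong)
qed

lemma approximable_if_indicators:
  assumes indicator: "\<And>A. A \<in> sets M \<Longrightarrow> approximable (indicator A)"
    and f: "square_integrable M f"
  shows "approximable f"
proof -
  have "f \<in> borel_measurable M" using f unfolding square_integrable_def by simp
  from borel_measurable_implies_sequence_metric[OF this, of 0]
  obtain F where "\<forall>i. simple_function M (F i)" "\<forall>x\<in>space M. (\<lambda>i. F i x) \<longlonglongrightarrow> f x"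
    "\<forall>i. \<forall>x\<in>space M. dist (F i x) 0 \<le> 2 * dist (f x) 0"
    by blast
  note F = this[rule_format]
  show ?thesis
  proof (rule approximable_dominated_limit[OF f _ F(2), where w="\<lambda>x. 9 * (cmod (f x))\<^sup>2"])
    show "approximable (F n)" for n by (rule approximable_simple_function[OF indicator F(1)])
    show "integrable M (\<lambda>x. 9 * (cmod (f x))\<^sup>2)" using f unfolding square_integrable_def by simp
    fix n x assume "x \<in> space M"
    then have "cmod (f x - F n x) \<le> 3 * cmod (f x)"
      using F(3)[of x n] norm_triangle_ineq4[of "f x" "F n x"] by (simp add: dist_norm)
    then have "(cmod (f x - F n x))\<^sup>2 \<le> (3 * cmod (f x))\<^sup>2" by (rule power_mono) simp
    then show "(cmod (f x - F n x))\<^sup>2 \<le> 9 * (cmod (f x))\<^sup>2" by (simp add: power_mult_distrib)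
  qed
qed

lemma approximable_indicator_sigma_sets:
  assumes G: "Int_stable G" "G \<subseteq> Pow (space M)" "sets M = sigma_sets (space M) G"
    and generator: "\<And>A. A \<in> G \<Longrightarrow> approximable (indicator A)"
    and A: "A \<in> sets M"
  shows "approximable (indicator A)"
proof -
  from A G(3) have "A \<in> sigma_sets (space M) G" by simp
  from G(1,2) this show ?thesis
  proof (induction rule: sigma_sets_induct_disjoint)
    case (basic A)
    then show ?case by (rule generator)
  next
    case empty
    then show ?case using approximable_const[of 0] by simp
  next
    case (compl A)
    have "approximable (\<lambda>x. 1 + (-1) * indicator A x)"
      by (intro approximable_add approximable_const approximable_mult_left compl.IH)
    then show ?case
      by (rule approximable_cong) (auto simp: indicator_def)
  next
    case (union A)
    have sets_A: "A i \<in> sets M" for i using union G(3) by auto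
    show ?case
    proof (rule approximable_bounded_limit[where g="\<lambda>n x. \<Sum>i<n. indicator (A i) x" and C=1])
      show "(indicator (\<Union>i. A i) :: 'a \<Rightarrow> complex) \<in> borel_measurable M"
        using sets_A by (intro borel_measurable_indicator) auto
      show "approximable (\<lambda>x. \<Sum>i<n. indicator (A i) x)" for n
        using union by (intro approximable_sum) auto
      fix x n
      show "(\<lambda>n. \<Sum>i<n. indicator (A i) x :: complex) \<longlonglongrightarrow> indicator (\<Union>i. A i) x"
        "cmod (\<Sum>i<n. indicator (A i) x :: complex) \<le> 1"
        using disjoint_family_indicator_partial_sums[OF union(1)] by blast+
    qed
  qed
qed

end

section \<open>Trigonometric polynomials\<close>

definition lincomb_on :: "'k set \<Rightarrow> ('k \<Rightarrow> 'x \<Rightarrow> complex) \<Rightarrow> 'x set \<Rightarrow> ('x \<Rightarrow> complex) \<Rightarrow> bool" where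
  "lincomb_on K e X P \<longleftrightarrow> (\<exists>S c. finite S \<and> S \<subseteq> K \<and> (\<forall>x\<in>X. P x = (\<Sum>k\<in>S. c k * e k x)))"

lemma lincomb_onI:
  assumes "finite I" "f ` I \<subseteq> K" "\<And>x. x \<in> X \<Longrightarrow> P x = (\<Sum>i\<in>I. d i * e (f i) x)"
  shows "lincomb_on K e X P"
  unfolding lincomb_on_def
proof (intro exI conjI ballI)
  show "finite (f ` I)" using assms by simp
  show "f ` I \<subseteq> K" by fact
  fix x assume "x \<in> X"
  then show "P x = (\<Sum>k\<in>f ` I. (\<Sum>i\<in>{i\<in>I. f i = k}. d i) * e k x)"
    using assms(3) sum.image_gen[OF assms(1), of "\<lambda>i. d i * e (f i) x" f]
    by (simp add: sum_distrib_right)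
qed

lemma lincomb_on_const:
  assumes "k0 \<in> K" "\<And>x. x \<in> X \<Longrightarrow> e k0 x = 1"
  shows "lincomb_on K e X (\<lambda>x. a)"
  unfolding lincomb_on_def using assms by (intro exI[of _ "{k0}"] exI[of _ "\<lambda>_. a"]) auto

lemma lincomb_on_mult_left:
  assumes "lincomb_on K e X P"
  shows "lincomb_on K e X (\<lambda>x. a * P x)"
proof -
  obtain S c where S: "finite S" "S \<subseteq> K" "\<And>x. x \<in> X \<Longrightarrow> P x = (\<Sum>k\<in>S. c k * e k x)"
    using assms unfolding lincomb_on_def by blast
  show ?thesis
    unfolding lincomb_on_def
    by (intro exI[of _ S] exI[of _ "\<lambda>k. a * c k"]) (simp add: S sum_distrib_left mult.assoc)
qed

lemma lincomb_on_add:
  assumes "lincomb_on K e X P" "lincomb_on K e X Q"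
  shows "lincomb_on K e X (\<lambda>x. P x + Q x)"
proof -
  obtain S c where S: "finite S" "S \<subseteq> K" "\<And>x. x \<in> X \<Longrightarrow> P x = (\<Sum>k\<in>S. c k * e k x)"
    using assms(1) unfolding lincomb_on_def by blast
  obtain S' c' where S': "finite S'" "S' \<subseteq> K" "\<And>x. x \<in> X \<Longrightarrow> Q x = (\<Sum>k\<in>S'. c' k * e k x)"
    using assms(2) unfolding lincomb_on_def by blast
  show ?thesis
  proof (rule lincomb_onI[where I="S <+> S'" and d="case_sum c c'" and f="case_sum id id"])
    show "finite (S <+> S')" "case_sum id id ` (S <+> S') \<subseteq> K" using S S' by auto
    show "P x + Q x = (\<Sum>i\<in>S <+> S'. case_sum c c' i * e (case_sum id id i) x)" if "x \<in> X" for x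
      using S S' that by (simp add: sum.Plus comp_def)
  qed
qed

lemma lincomb_on_mult:
  assumes "lincomb_on K e X P" "lincomb_on K e X Q"
    and closed: "\<And>k k'. k \<in> K \<Longrightarrow> k' \<in> K \<Longrightarrow> plus_k k k' \<in> K"
    and mult: "\<And>k k' x. k \<in> K \<Longrightarrow> k' \<in> K \<Longrightarrow> x \<in> X \<Longrightarrow> e k x * e k' x = e (plus_k k k') x"
  shows "lincomb_on K e X (\<lambda>x. P x * Q x)"
proof -
  obtain S c where S: "finite S" "S \<subseteq> K" "\<And>x. x \<in> X \<Longrightarrow> P x = (\<Sum>k\<in>S. c k * e k x)"
    using assms(1) unfolding lincomb_on_def by blast
  obtain S' c' where S': "finite S'" "S' \<subseteq> K" "\<And>x. x \<in> X \<Longrightarrow> Q x = (\<Sum>k\<in>S'. c' k * e k x)"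
    using assms(2) unfolding lincomb_on_def by blast
  show ?thesis
  proof (rule lincomb_onI[where I="S \<times> S'" and d="\<lambda>(k,k'). c k * c' k'" and f="\<lambda>(k,k'). plus_k k k'"])
    show "finite (S \<times> S')" using S S' by simp
    show "(\<lambda>(k,k'). plus_k k k') ` (S \<times> S') \<subseteq> K" using S(2) S'(2) by (auto intro!: closed)
    fix x assume x: "x \<in> X"
    have "P x * Q x = (\<Sum>k\<in>S. \<Sum>k'\<in>S'. (c k * e k x) * (c' k' * e k' x))"
      using S S' x by (simp add: sum_product)
    also have "\<dots> = (\<Sum>k\<in>S. \<Sum>k'\<in>S'. (c k * c' k') * e (plus_k k k') x)"
    proof (intro sum.cong refl)
      fix k k' assume "k \<in> S" "k' \<in> S'"
      then have "e k x * e k' x = e (plus_k k k') x" using S(2) S'(2) x by (intro mult) auto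
      moreover have "(c k * e k x) * (c' k' * e k' x) = (c k * c' k') * (e k x * e k' x)"
        by (simp add: ac_simps)
      ultimately show "(c k * e k x) * (c' k' * e k' x) = (c k * c' k') * e (plus_k k k') x"
        by simp
    qed
    also have "\<dots> = (\<Sum>i\<in>S \<times> S'. (case i of (k,k') \<Rightarrow> c k * c' k') * e (case i of (k,k') \<Rightarrow> plus_k k k') x)"
      unfolding sum.cartesian_product by (intro sum.cong refl) (simp add: split_beta)
    finally show "P x * Q x = (\<Sum>i\<in>S \<times> S'. (case i of (k,k') \<Rightarrow> c k * c' k') * e (case i of (k,k') \<Rightarrow> plus_k k k') x)" .
  qed
qed

lemma lincomb_on_prod:
  assumes "finite F" "\<And>i. i \<in> F \<Longrightarrow> lincomb_on K e X (P i)"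
    and "k0 \<in> K" "\<And>x. x \<in> X \<Longrightarrow> e k0 x = 1"
    and "\<And>k k'. k \<in> K \<Longrightarrow> k' \<in> K \<Longrightarrow> plus_k k k' \<in> K"
    and "\<And>k k' x. k \<in> K \<Longrightarrow> k' \<in> K \<Longrightarrow> x \<in> X \<Longrightarrow> e k x * e k' x = e (plus_k k k') x"
  shows "lincomb_on K e X (\<lambda>x. \<Prod>i\<in>F. P i x)"
  using assms(1,2)
proof (induction F rule: finite_induct)
  case empty
  then show ?case using lincomb_on_const[of k0 K X e 1] assms(3,4) by simp
next
  case (insert a F)
  then show ?case
    using lincomb_on_mult[of K e X "P a" "\<lambda>x. \<Prod>i\<in>F. P i x", OF _ _ assms(5,6)] by simp
qed

definition real_char :: "real \<Rightarrow> real \<Rightarrow> complex" where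
  "real_char s t = exp (\<i> * complex_of_real (s * t))"

abbreviation real_trig_poly :: "(real \<Rightarrow> complex) \<Rightarrow> bool" where
  "real_trig_poly \<equiv> lincomb_on UNIV real_char UNIV"

lemma real_trig_poly_mult: "real_trig_poly P \<Longrightarrow> real_trig_poly Q \<Longrightarrow> real_trig_poly (\<lambda>x. P x * Q x)"
  by (rule lincomb_on_mult[where plus_k="(+)"]) (auto simp: real_char_def exp_add[symmetric] algebra_simps)

lemma real_trig_poly_const: "real_trig_poly (\<lambda>x. a)"
  by (rule lincomb_on_const[of 0]) (auto simp: real_char_def)

lemma real_trig_poly_sin: "real_trig_poly (\<lambda>t. complex_of_real (sin (w * t)))"
proof (rule lincomb_onI[where I="{True, False}" and f="\<lambda>b. if b then w else -w"
    and d="\<lambda>b. if b then 1/(2*\<i>) else -1/(2*\<i>)"])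
  fix t
  have "complex_of_real (sin (w * t)) = sin (complex_of_real (w * t))"
    by (rule sin_of_real[symmetric])
  also have "\<dots> = (exp (\<i> * complex_of_real (w*t)) - exp (- (\<i> * complex_of_real (w*t)))) / (2 * \<i>)"
    by (rule sin_exp_eq)
  also have "\<dots> = 1/(2*\<i>) * real_char w t + (-1/(2*\<i>)) * real_char (-w) t"
    unfolding real_char_def by (simp add: field_simps)
  finally show "complex_of_real (sin (w * t))
      = (\<Sum>i\<in>{True, False}. (if i then 1/(2*\<i>) else -1/(2*\<i>)) * real_char (if i then w else - w) t)"
    by simp
qed auto

lemma real_trig_poly_polynomial_sin:
  assumes "real_polynomial_function p"
  shows "real_trig_poly (\<lambda>t. complex_of_real (p (sin (w * t))))"
  using assms
proof (induction p)
  case (linear f)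
  then obtain c0 where "f = (\<lambda>x. x * c0)" using real_bounded_linear by blast
  then show ?case
    using lincomb_on_mult_left[OF real_trig_poly_sin, of "complex_of_real c0" w] by (simp add: mult.commute)
next
  case (const c)
  then show ?case using real_trig_poly_const by simp
next
  case (add f g)
  then show ?case using lincomb_on_add by fastforce
next
  case (mult f g)
  then show ?case using real_trig_poly_mult by fastforce
qed

definition ramp :: "real \<Rightarrow> real \<Rightarrow> real \<Rightarrow> real" where
  "ramp a n t = max 0 (min 1 (1 - n * (t - a)))"

lemma ramp_bounds: "0 \<le> ramp a n t" "ramp a n t \<le> 1"
  unfolding ramp_def by auto

lemma ramp_tendsto_indicator:
  "(\<lambda>k. ramp a (real (Suc k)) t) \<longlonglongrightarrow> (if t \<le> a then 1 else 0)"
proof (cases "t \<le> a")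
  case True
  then have "ramp a (real (Suc k)) t = 1" for k
    unfolding ramp_def by (simp add: mult_nonneg_nonpos)
  with True show ?thesis by simp
next
  case False
  obtain N :: nat where N: "1 / (t - a) < N" using reals_Archimedean2 by blast
  have "ramp a (real (Suc k)) t = 0" if "k \<ge> N" for k
  proof -
    have "1 / (t - a) < real (Suc k)" using N that by linarith
    then have "1 < real (Suc k) * (t - a)" using False by (simp add: field_simps)
    then show ?thesis unfolding ramp_def by simp
  qed
  then have "eventually (\<lambda>k. ramp a (real (Suc k)) t = 0) sequentially"
    unfolding eventually_sequentially by blast
  with False show ?thesis by (simp add: tendsto_eventually)
qed

lemma tendsto_indicator_if_close_to_ramp:
  fixes g :: "nat \<Rightarrow> real"
  assumes "\<And>k. \<bar>t\<bar> \<le> real (Suc k) \<Longrightarrow> \<bar>g k - ramp a (real (Suc k)) t\<bar> \<le> 1 / real (Suc k)"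
  shows "g \<longlonglongrightarrow> (if t \<le> a then 1 else 0)"
proof -
  obtain N :: nat where "\<bar>t\<bar> \<le> N" using real_arch_simple by blast
  then have "eventually (\<lambda>k. \<bar>t\<bar> \<le> real (Suc k)) sequentially"
    unfolding eventually_sequentially by (intro exI[of _ N]) auto
  then have "eventually (\<lambda>k. norm (g k - ramp a (real (Suc k)) t) \<le> inverse (real (Suc k))) sequentially"
    by eventually_elim (use assms in \<open>simp add: divide_inverse\<close>)
  then have "(\<lambda>k. g k - ramp a (real (Suc k)) t) \<longlonglongrightarrow> 0"
    by (rule Lim_null_comparison[OF _ LIMSEQ_inverse_real_of_nat])
  from tendsto_add[OF this ramp_tendsto_indicator[of a t]] show ?thesis by simp
qed

lemma ramp_arcsin_polynomial_approx:
  assumes "n > 0"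
  shows "\<exists>p. real_polynomial_function p \<and>
           (\<forall>y\<in>{-1..1}. \<bar>ramp a n (arcsin y * (2 * n / pi)) - p y\<bar> < 1/n)"
proof -
  have "continuous_on {-1..1} (\<lambda>y. ramp a n (arcsin y * (2 * n / pi)))"
    unfolding ramp_def by (intro continuous_intros continuous_on_arcsin) auto
  from Stone_Weierstrass_polynomial_function[OF compact_Icc this, of "1/n"] assms
  show ?thesis by (auto simp: real_polynomial_function_eq)
qed

text \<open>The substitution \<open>y = sin (\<pi> t / 2n)\<close> reparametrises \<open>|t| \<le> n\<close> bijectively, and
  polynomials in \<open>y\<close> are trigonometric polynomials in \<open>t\<close>.\<close>

lemma real_trig_poly_approx_halfline:
  "\<exists>P::nat \<Rightarrow> real \<Rightarrow> complex. (\<forall>k. real_trig_poly (P k)) \<and> (\<forall>k t. cmod (P k t) \<le> 2) \<and>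
     (\<forall>t. (\<lambda>k. P k t) \<longlonglongrightarrow> (if t \<le> a then 1 else 0))"
proof -
  define n where "n k = real (Suc k)" for k
  define w where "w k = pi / (2 * n k)" for k
  have n_pos: "n k > 0" for k unfolding n_def by simp
  obtain p where p: "\<And>k. real_polynomial_function (p k)"
    "\<And>k y. y \<in> {-1..1} \<Longrightarrow> \<bar>ramp a (n k) (arcsin y * (2 * n k / pi)) - p k y\<bar> < 1 / n k"
    using ramp_arcsin_polynomial_approx[OF n_pos, of a] by metis
  define P where "P k t = complex_of_real (p k (sin (w k * t)))" for k t
  have sin_range: "sin x \<in> {-1..1}" for x :: real
    by (auto simp: sin_ge_minus_one sin_le_one)
  have bound: "cmod (P k t) \<le> 2" for k t
  proof -
    have "1 / n k \<le> 1" unfolding n_def by simp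
    then have "\<bar>p k (sin (w k * t))\<bar> \<le> 2"
      using p(2)[OF sin_range, of k "w k * t"]
        ramp_bounds[of a "n k" "arcsin (sin (w k * t)) * (2 * n k / pi)"] by linarith
    then show ?thesis unfolding P_def by simp
  qed
  have close: "\<bar>p k (sin (w k * t)) - ramp a (n k) t\<bar> \<le> 1 / n k" if "\<bar>t\<bar> \<le> n k" for k t
  proof -
    have "\<bar>w k * t\<bar> \<le> pi / 2"
      using that n_pos[of k] unfolding w_def by (simp add: abs_mult field_simps)
    then have "arcsin (sin (w k * t)) = w k * t" by (intro arcsin_sin) auto
    then have "arcsin (sin (w k * t)) * (2 * n k / pi) = t"
      using n_pos[of k] by (simp add: w_def)
    then show ?thesis using p(2)[OF sin_range, of k "w k * t"] by simp
  qed
  have "(\<lambda>k. p k (sin (w k * t))) \<longlonglongrightarrow> (if t \<le> a then 1 else 0)" for t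
    by (rule tendsto_indicator_if_close_to_ramp[OF close[unfolded n_def]])
  then have "(\<lambda>k. P k t) \<longlonglongrightarrow> of_real (if t \<le> a then 1 else 0)" for t
    unfolding P_def by (rule tendsto_of_real)
  then have "(\<lambda>k. P k t) \<longlonglongrightarrow> (if t \<le> a then 1 else 0)" for t
    by (metis of_real_0 of_real_1)
  moreover have "real_trig_poly (P k)" for k
    unfolding P_def by (rule real_trig_poly_polynomial_sin[OF p(1)])
  ultimately show ?thesis using bound by blast
qed

section \<open>Cylinder measures on the algebraic dual\<close>

lemma Qstar_add: "l \<in> Qstar \<Longrightarrow> l' \<in> Qstar \<Longrightarrow> (\<lambda>\<phi>. l \<phi> + l' \<phi>) \<in> Qstar"
  unfolding Qstar_def by (auto intro: bounded_linear_add)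

lemma Qstar_mult_left: "l \<in> Qstar \<Longrightarrow> (\<lambda>\<phi>. c * l \<phi>) \<in> Qstar"
  unfolding Qstar_def by (auto intro: bounded_linear_compose[OF bounded_linear_mult_right])

lemma Qstar_zero: "(\<lambda>\<phi>. 0) \<in> Qstar"
  unfolding Qstar_def by simp

lemma Qhat_add: "x \<in> Qhat \<Longrightarrow> l \<in> Qstar \<Longrightarrow> l' \<in> Qstar \<Longrightarrow> x (\<lambda>\<phi>. l \<phi> + l' \<phi>) = x l + x l'"
  unfolding Qhat_def by blast

lemma Qhat_mult_left: "x \<in> Qhat \<Longrightarrow> l \<in> Qstar \<Longrightarrow> x (\<lambda>\<phi>. c * l \<phi>) = c * x l"
  unfolding Qhat_def by blast

lemma Qhat_zero: "x \<in> Qhat \<Longrightarrow> x (\<lambda>\<phi>. 0) = 0"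
  using Qhat_mult_left[OF _ Qstar_zero, of x 0] by simp

definition dual_char :: "('q::real_normed_vector \<Rightarrow> real) \<Rightarrow> (('q \<Rightarrow> real) \<Rightarrow> real) \<Rightarrow> complex" where
  "dual_char l x = exp (\<i> * complex_of_real (x l))"

abbreviation dual_trig_poly :: "((('q::real_normed_vector \<Rightarrow> real) \<Rightarrow> real) \<Rightarrow> complex) \<Rightarrow> bool" where
  "dual_trig_poly \<equiv> lincomb_on Qstar dual_char Qhat"

lemma dual_char_add:
  "x \<in> Qhat \<Longrightarrow> l \<in> Qstar \<Longrightarrow> l' \<in> Qstar \<Longrightarrow> dual_char l x * dual_char l' x = dual_char (\<lambda>\<phi>. l \<phi> + l' \<phi>) x"
  unfolding dual_char_def by (simp add: Qhat_add exp_add[symmetric] algebra_simps)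

lemma dual_char_zero: "x \<in> Qhat \<Longrightarrow> dual_char (\<lambda>\<phi>. 0) x = 1"
  unfolding dual_char_def by (simp add: Qhat_zero)

lemma norm_dual_char: "cmod (dual_char l x) = 1"
  unfolding dual_char_def by (simp add: norm_exp_i_times)

lemma dual_trig_poly_const: "dual_trig_poly (\<lambda>x. a)"
  by (rule lincomb_on_const[of "\<lambda>\<phi>. 0"]) (auto intro: Qstar_zero dual_char_zero)

lemma dual_trig_poly_prod:
  "finite F \<Longrightarrow> (\<And>i. i \<in> F \<Longrightarrow> dual_trig_poly (P i)) \<Longrightarrow> dual_trig_poly (\<lambda>x. \<Prod>i\<in>F. P i x)"
  by (rule lincomb_on_prod[where plus_k="\<lambda>l l' \<phi>. l \<phi> + l' \<phi>"])
    (auto intro: Qstar_add dual_char_add Qstar_zero dual_char_zero)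

lemma dual_trig_poly_eval:
  assumes "real_trig_poly P" "l \<in> Qstar"
  shows "dual_trig_poly (\<lambda>x. P (x l))"
proof -
  obtain S c where S: "finite S" "\<And>t. P t = (\<Sum>s\<in>S. c s * real_char s t)"
    using assms(1) unfolding lincomb_on_def by blast
  show ?thesis
  proof (rule lincomb_onI[where I=S and d=c and f="\<lambda>s \<phi>. s * l \<phi>"])
    show "(\<lambda>s \<phi>. s * l \<phi>) ` S \<subseteq> Qstar" using Qstar_mult_left[OF assms(2)] by auto
    show "P (x l) = (\<Sum>s\<in>S. c s * dual_char (\<lambda>\<phi>. s * l \<phi>) x)" if "x \<in> Qhat" for x
      unfolding S(2) real_char_def dual_char_def using Qhat_mult_left[OF that assms(2)] by simp
  qed (rule S(1))
qed

lemma dual_trig_poly_bounded: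
  assumes "dual_trig_poly P"
  shows "\<exists>C. \<forall>x\<in>Qhat. cmod (P x) \<le> C"
proof -
  obtain S c where S: "\<And>x. x \<in> Qhat \<Longrightarrow> P x = (\<Sum>k\<in>S. c k * dual_char k x)"
    using assms unfolding lincomb_on_def by blast
  have "cmod (P x) \<le> (\<Sum>k\<in>S. cmod (c k))" if "x \<in> Qhat" for x
    unfolding S[OF that] using norm_sum[of "\<lambda>k. c k * dual_char k x" S]
    by (simp add: norm_mult norm_dual_char)
  then show ?thesis by blast
qed

definition halfspace_cylinders :: "(('q::real_normed_vector \<Rightarrow> real) \<Rightarrow> real) set set" where
  "halfspace_cylinders = {{x \<in> Qhat. \<forall>(l, a)\<in>F. x l \<le> a} | F. finite F \<and> fst ` F \<subseteq> Qstar}"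

lemma Int_stable_halfspace_cylinders: "Int_stable halfspace_cylinders"
  unfolding Int_stable_def halfspace_cylinders_def
proof safe
  fix F F' :: "(('q::real_normed_vector \<Rightarrow> real) \<times> real) set"
  assume "finite F" "fst ` F \<subseteq> Qstar" "finite F'" "fst ` F' \<subseteq> Qstar"
  then show "\<exists>F''. {x \<in> Qhat. \<forall>(l, a)\<in>F. x l \<le> a} \<inter> {x \<in> Qhat. \<forall>(l, a)\<in>F'. x l \<le> a}
      = {x \<in> Qhat. \<forall>(l, a)\<in>F''. x l \<le> a} \<and> finite F'' \<and> fst ` F'' \<subseteq> Qstar"
    by (intro exI[of _ "F \<union> F'"]) auto
qed

lemma halfspace_cylinders_subset_Pow: "halfspace_cylinders \<subseteq> Pow Qhat"
  unfolding halfspace_cylinders_def by auto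

lemma eval_cylinder_in_sigma_halfspace_cylinders:
  assumes l: "l \<in> Qstar" and B: "B \<in> sets borel"
  shows "{x \<in> Qhat. x l \<in> B} \<in> sigma_sets Qhat halfspace_cylinders"
proof -
  let ?N = "sigma Qhat halfspace_cylinders"
  have space_N: "space ?N = Qhat"
    by (rule space_measure_of[OF halfspace_cylinders_subset_Pow])
  have sets_N: "sets ?N = sigma_sets Qhat halfspace_cylinders"
    by (rule sets_measure_of[OF halfspace_cylinders_subset_Pow])
  have "{x \<in> Qhat. x l \<le> c} \<in> halfspace_cylinders" for c
    unfolding halfspace_cylinders_def using l by (intro CollectI exI[of _ "{(l, c)}"]) simp
  then have "(\<lambda>x. x l) \<in> borel_measurable ?N"
    unfolding borel_measurable_iff_le space_N sets_N by (blast intro: sigma_sets.Basic)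
  from measurable_sets[OF this B] show ?thesis
    unfolding space_N sets_N by (simp add: Int_commute vimage_def Collect_conj_eq)
qed

lemma prod_indicator_halfspaces:
  assumes "finite F" "x \<in> X"
  shows "(\<Prod>(l, a)\<in>F. if x l \<le> a then 1 else 0) = (indicator {x \<in> X. \<forall>(l, a)\<in>F. x l \<le> a} x :: complex)"
proof (cases "\<forall>(l, a)\<in>F. x l \<le> a")
  case True
  then have "(\<Prod>(l, a)\<in>F. if x l \<le> a then 1 else 0 :: complex) = 1"
    by (intro prod.neutral) auto
  with True assms(2) show ?thesis by simp
next
  case False
  then obtain l a where la: "(l, a) \<in> F" "\<not> x l \<le> a" by auto
  have "(\<Prod>(l, a)\<in>F. if x l \<le> a then 1 else 0 :: complex) = 0"
    using la by (intro prod_zero[OF assms(1)] bexI[of _ "(l, a)"]) auto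
  with False show ?thesis by simp
qed

locale cylinder_measure = finite_measure \<nu>
  for \<nu> :: "(('q::real_normed_vector \<Rightarrow> real) \<Rightarrow> real) measure" +
  assumes space_eq: "space \<nu> = Qhat" and sets_eq: "sets \<nu> = Qhat_sets"
begin

lemma measurable_eval:
  assumes "l \<in> Qstar"
  shows "(\<lambda>x. x l) \<in> borel_measurable \<nu>"
proof (rule measurableI)
  fix B :: "real set" assume "B \<in> sets borel"
  then have "{x \<in> Qhat. x l \<in> B} \<in> Qhat_sets"
    unfolding Qhat_sets_def using assms by (intro sigma_sets.Basic) blast
  moreover have "(\<lambda>x. x l) -` B \<inter> space \<nu> = {x \<in> Qhat. x l \<in> B}" using space_eq by auto
  ultimately show "(\<lambda>x. x l) -` B \<inter> space \<nu> \<in> sets \<nu>" using sets_eq by simp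
qed simp

lemma measurable_dual_trig_poly:
  assumes "dual_trig_poly P"
  shows "P \<in> borel_measurable \<nu>"
proof -
  obtain S c where S: "S \<subseteq> Qstar" "\<And>x. x \<in> Qhat \<Longrightarrow> P x = (\<Sum>k\<in>S. c k * dual_char k x)"
    using assms unfolding lincomb_on_def by blast
  have "(\<lambda>x. \<Sum>k\<in>S. c k * dual_char k x) \<in> borel_measurable \<nu>"
    unfolding dual_char_def using S(1) measurable_eval by (intro borel_measurable_sum) auto
  moreover have "P x = (\<Sum>k\<in>S. c k * dual_char k x)" if "x \<in> space \<nu>" for x
    using S(2) space_eq that by simp
  ultimately show ?thesis
    using measurable_cong[of \<nu> P "\<lambda>x. \<Sum>k\<in>S. c k * dual_char k x" borel] by simp
qed

lemma square_integrable_dual_trig_poly: "dual_trig_poly P \<Longrightarrow> square_integrable \<nu> P"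
proof -
  assume P: "dual_trig_poly P"
  then obtain C where "\<forall>x\<in>Qhat. cmod (P x) \<le> C" using dual_trig_poly_bounded by blast
  then show ?thesis
    by (intro square_integrable_bounded[OF measurable_dual_trig_poly[OF P], where C=C]) (simp add: space_eq)
qed

sublocale L2_approximation \<nu> "Collect dual_trig_poly"
  by unfold_locales
    (simp_all add: square_integrable_dual_trig_poly lincomb_on_add lincomb_on_mult_left dual_trig_poly_const)

lemma halfspace_cylinder_sets:
  assumes "A \<in> halfspace_cylinders"
  shows "A \<in> sets \<nu>"
proof -
  obtain F where F: "finite F" "fst ` F \<subseteq> Qstar" "A = {x \<in> Qhat. \<forall>(l, a)\<in>F. x l \<le> a}"
    using assms unfolding halfspace_cylinders_def by blast
  have "{x \<in> space \<nu>. \<forall>(l, a)\<in>F. x l \<le> a} \<in> sets \<nu>"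
    unfolding case_prod_beta
  proof (rule sets.sets_Collect_finite_All[OF _ F(1)])
    fix p assume "p \<in> F"
    then have "fst p \<in> Qstar" using F(2) by auto
    from measurable_eval[OF this] show "{x \<in> space \<nu>. x (fst p) \<le> snd p} \<in> sets \<nu>"
      unfolding borel_measurable_iff_le by blast
  qed
  then show ?thesis using F(3) space_eq by (simp add: case_prod_beta)
qed

lemma sets_eq_sigma_halfspace_cylinders: "sets \<nu> = sigma_sets (space \<nu>) halfspace_cylinders"
proof -
  have generators: "sets \<nu> = sigma_sets Qhat (\<Union>l\<in>Qstar. {{x \<in> Qhat. x l \<in> B} | B. B \<in> sets borel})"
    using sets_eq unfolding Qhat_sets_def .
  also have "\<dots> = sigma_sets Qhat halfspace_cylinders"
  proof (rule sigma_sets_eqI)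
    show "a \<in> sigma_sets Qhat halfspace_cylinders"
      if "a \<in> (\<Union>l\<in>Qstar. {{x \<in> Qhat. x l \<in> B} | B. B \<in> sets borel})"
      for a :: "(('q \<Rightarrow> real) \<Rightarrow> real) set"
      using that eval_cylinder_in_sigma_halfspace_cylinders by blast
    show "b \<in> sigma_sets Qhat (\<Union>l\<in>Qstar. {{x \<in> Qhat. x l \<in> B} | B. B \<in> sets borel})"
      if "b \<in> halfspace_cylinders" for b :: "(('q \<Rightarrow> real) \<Rightarrow> real) set"
      using halfspace_cylinder_sets[OF that] unfolding generators .
  qed
  finally show ?thesis using space_eq by simp
qed

lemma approximable_indicator_halfspace_cylinder:
  assumes "A \<in> halfspace_cylinders"
  shows "approximable (indicator A)"
proof -
  obtain F where F: "finite F" "fst ` F \<subseteq> Qstar" "A = {x \<in> Qhat. \<forall>(l, a)\<in>F. x l \<le> a}"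
    using assms unfolding halfspace_cylinders_def by blast
  obtain P where P: "\<And>a k. real_trig_poly (P a k)" "\<And>a k t. cmod (P a k t) \<le> 2"
    "\<And>a t. (\<lambda>k. P a k t) \<longlonglongrightarrow> (if t \<le> a then 1 else 0)"
    using real_trig_poly_approx_halfline by metis
  define g where "g k x = (\<Prod>(l, a)\<in>F. P a k (x l))" for k x
  show ?thesis
  proof (rule approximable_bounded_limit[where g=g and C="2 ^ card F"])
    show "indicator A \<in> borel_measurable \<nu>"
      using halfspace_cylinder_sets[OF assms] by simp
    show "approximable (g k)" for k
      unfolding g_def case_prod_beta using F(1,2)
      by (intro approximable_T CollectI dual_trig_poly_prod dual_trig_poly_eval P(1)) auto
    fix x assume x: "x \<in> space \<nu>"
    have "(\<lambda>k. g k x) \<longlonglongrightarrow> (\<Prod>(l, a)\<in>F. if x l \<le> a then 1 else 0)"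
      unfolding g_def case_prod_beta by (intro tendsto_prod P(3))
    also have "(\<Prod>(l, a)\<in>F. if x l \<le> a then 1 else 0) = (indicator A x :: complex)"
      unfolding F(3) using F(1) x space_eq by (intro prod_indicator_halfspaces) auto
    finally show "(\<lambda>k. g k x) \<longlonglongrightarrow> indicator A x" .
    fix k
    have "cmod (g k x) = (\<Prod>(l, a)\<in>F. cmod (P a k (x l)))"
      unfolding g_def case_prod_beta by (simp add: prod_norm)
    also have "\<dots> \<le> (\<Prod>(l, a)\<in>F. 2)"
      unfolding case_prod_beta by (intro prod_mono) (auto intro: P(2))
    finally show "cmod (g k x) \<le> 2 ^ card F" by simp
  qed
qed

theorem square_integrable_imp_approximable:
  assumes "square_integrable \<nu> f"
  shows "approximable f"
proof (rule approximable_if_indicators[OF _ assms])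
  have "halfspace_cylinders \<subseteq> Pow (space \<nu>)"
    using halfspace_cylinders_subset_Pow space_eq by simp
  then show "approximable (indicator A)" if "A \<in> sets \<nu>" for A
    by (rule approximable_indicator_sigma_sets[OF Int_stable_halfspace_cylinders _
          sets_eq_sigma_halfspace_cylinders approximable_indicator_halfspace_cylinder that])
qed

lemma approximation_by_spanning_family:
  assumes f: "square_integrable \<nu> f" and "\<epsilon> > 0"
    and span: "\<And>P. dual_trig_poly P \<Longrightarrow> \<exists>T c. finite T \<and> (\<forall>x\<in>Qhat. P x = (\<Sum>\<tau>\<in>T. c \<tau> * k \<tau> x))"
  shows "\<exists>T c. finite T \<and> integrable \<nu> (\<lambda>x. (cmod (f x - (\<Sum>\<tau>\<in>T. c \<tau> * k \<tau> x)))\<^sup>2) \<and>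
           (\<integral>x. (cmod (f x - (\<Sum>\<tau>\<in>T. c \<tau> * k \<tau> x)))\<^sup>2 \<partial>\<nu>) < \<epsilon>"
proof -
  obtain P where P: "P \<in> Collect dual_trig_poly" "(\<integral>x. (cmod (f x - P x))\<^sup>2 \<partial>\<nu>) < \<epsilon>"
    using approximableE[OF square_integrable_imp_approximable[OF f] \<open>\<epsilon> > 0\<close>] .
  obtain T c where T: "finite T" "\<forall>x\<in>Qhat. P x = (\<Sum>\<tau>\<in>T. c \<tau> * k \<tau> x)"
    using span[of P] P(1) by auto
  define K where "K x = (\<Sum>\<tau>\<in>T. c \<tau> * k \<tau> x)" for x
  have same: "\<And>x. x \<in> space \<nu> \<Longrightarrow> (cmod (f x - K x))\<^sup>2 = (cmod (f x - P x))\<^sup>2"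
    using T(2) space_eq by (simp add: K_def)
  have "integrable \<nu> (\<lambda>x. (cmod (f x - P x))\<^sup>2)"
    using square_integrable_diff[OF f square_integrable_dual_trig_poly] P(1)
    unfolding square_integrable_def by simp
  moreover have "integrable \<nu> (\<lambda>x. (cmod (f x - K x))\<^sup>2) \<longleftrightarrow> integrable \<nu> (\<lambda>x. (cmod (f x - P x))\<^sup>2)"
    by (rule Bochner_Integration.integrable_cong) (simp_all add: same)
  moreover have "(\<integral>x. (cmod (f x - K x))\<^sup>2 \<partial>\<nu>) = (\<integral>x. (cmod (f x - P x))\<^sup>2 \<partial>\<nu>)"
    by (rule Bochner_Integration.integral_cong) (simp_all add: same)
  ultimately have "finite T \<and> integrable \<nu> (\<lambda>x. (cmod (f x - K x))\<^sup>2) \<and>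
      (\<integral>x. (cmod (f x - K x))\<^sup>2 \<partial>\<nu>) < \<epsilon>"
    using T(1) P(2) by simp
  then show ?thesis unfolding K_def by (intro exI[of _ T] exI[of _ c])
qed

end

section \<open>Canonical extensions of characters\<close>

definition dual_functional :: "('v::real_vector \<Rightarrow> real) set \<Rightarrow> (('v \<Rightarrow> real) \<Rightarrow> real) \<Rightarrow> bool" where
  "dual_functional A x \<longleftrightarrow>
     (\<forall>l\<in>A. linear l) \<and>
     (\<forall>l\<in>A. \<forall>l'\<in>A. (\<lambda>\<phi>. l \<phi> + l' \<phi>) \<in> A \<and> x (\<lambda>\<phi>. l \<phi> + l' \<phi>) = x l + x l') \<and>
     (\<forall>l\<in>A. \<forall>c. (\<lambda>\<phi>. c * l \<phi>) \<in> A \<and> x (\<lambda>\<phi>. c * l \<phi>) = c * x l)"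

lemma dual_functionalD:
  assumes "dual_functional A x"
  shows "\<And>l. l \<in> A \<Longrightarrow> linear l"
    and "\<And>l l'. l \<in> A \<Longrightarrow> l' \<in> A \<Longrightarrow> (\<lambda>\<phi>. l \<phi> + l' \<phi>) \<in> A"
    and "\<And>l l'. l \<in> A \<Longrightarrow> l' \<in> A \<Longrightarrow> x (\<lambda>\<phi>. l \<phi> + l' \<phi>) = x l + x l'"
    and "\<And>l c. l \<in> A \<Longrightarrow> (\<lambda>\<phi>. c * l \<phi>) \<in> A"
    and "\<And>l c. l \<in> A \<Longrightarrow> x (\<lambda>\<phi>. c * l \<phi>) = c * x l"
  using assms unfolding dual_functional_def by blast+

lemma dual_functional_restrict: "dual_functional A x \<Longrightarrow> dual_functional {l \<in> A. l b = 0} x"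
  unfolding dual_functional_def by auto

text \<open>If \<open>x\<close> is evaluation at \<open>\<phi>'\<close> on the functionals vanishing at \<open>b\<close>, then it is evaluation at
  \<open>\<phi>' + t b\<close> on all of \<open>A\<close>, where \<open>t\<close> corrects the value on one functional \<open>l\<^sub>0\<close> with
  \<open>l\<^sub>0 b = 1\<close>: every \<open>l \<in> A\<close> is \<open>l b \<cdot> l\<^sub>0\<close> plus a functional vanishing at \<open>b\<close>.\<close>

lemma dual_functional_evaluation_extend:
  assumes A: "dual_functional A x" and \<phi>': "\<And>l. l \<in> A \<Longrightarrow> l b = 0 \<Longrightarrow> l \<phi>' = x l"
  shows "\<exists>\<phi>. \<forall>l\<in>A. l \<phi> = x l"
proof (cases "\<forall>l\<in>A. l b = 0")
  case True
  with \<phi>' show ?thesis by blast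
next
  case False
  then obtain l1 where l1: "l1 \<in> A" "l1 b \<noteq> 0" by blast
  define l0 where "l0 = (\<lambda>\<phi>. (1 / l1 b) * l1 \<phi>)"
  have l0: "l0 \<in> A" "l0 b = 1"
    unfolding l0_def by (rule dual_functionalD(4)[OF A l1(1)]) (use l1(2) in simp)
  define t where "t = x l0 - l0 \<phi>'"
  have "l (\<phi>' + t *\<^sub>R b) = x l" if l: "l \<in> A" for l
  proof -
    define m where "m = (\<lambda>\<phi>. l \<phi> + (- l b) * l0 \<phi>)"
    have m: "m \<in> A" "m b = 0"
      unfolding m_def by (rule dual_functionalD(2)[OF A l dual_functionalD(4)[OF A l0(1)]])
        (use l0(2) in simp)
    have "x m = x l + (- l b) * x l0"
      unfolding m_def by (simp only: dual_functionalD(3)[OF A l dual_functionalD(4)[OF A l0(1)]]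
          dual_functionalD(5)[OF A l0(1)])
    moreover have "l \<phi>' = m \<phi>' + l b * l0 \<phi>'"
      unfolding m_def by simp
    moreover have "l (\<phi>' + t *\<^sub>R b) = l \<phi>' + t * l b"
      using dual_functionalD(1)[OF A l] by (simp add: linear_add linear_scale)
    ultimately show ?thesis using \<phi>'[OF m] unfolding t_def by (simp add: algebra_simps)
  qed
  then show ?thesis by blast
qed

lemma dual_functional_is_evaluation:
  assumes "finite B" "dual_functional A x"
    and "\<And>l. l \<in> A \<Longrightarrow> \<forall>b\<in>B. l b = 0 \<Longrightarrow> \<forall>u. l u = 0"
  shows "\<exists>\<phi>. \<forall>l\<in>A. l \<phi> = x l"
  using assms
proof (induction B arbitrary: A rule: finite_induct)
  case empty
  have "x l = 0" if "l \<in> A" for l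
  proof -
    have "l = (\<lambda>\<phi>. 0)" using empty.prems(2)[OF that] by auto
    then show ?thesis using dual_functionalD(5)[OF empty.prems(1) that, of 0] by simp
  qed
  then show ?case using empty.prems(2) by auto
next
  case (insert b B)
  have "\<exists>\<phi>'. \<forall>l\<in>{l \<in> A. l b = 0}. l \<phi>' = x l"
    using insert.prems by (intro insert.IH dual_functional_restrict) auto
  then show ?case
    using dual_functional_evaluation_extend[OF insert.prems(1)] by blast
qed

lemma Qhat_evaluation_on_annihilator:
  fixes W :: "'q::real_normed_vector set"
  assumes W: "closed_fin_codim W" and x: "x \<in> Qhat"
  shows "\<exists>\<phi>. \<forall>l\<in>Qstar. (\<forall>w\<in>W. l w = 0) \<longrightarrow> l \<phi> = x l"
proof -
  obtain B where B: "finite B" "span (W \<union> B) = UNIV"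
    using W unfolding closed_fin_codim_def by blast
  let ?A = "{l \<in> Qstar. \<forall>w\<in>W. l w = 0}"
  have "dual_functional ?A x"
    unfolding dual_functional_def
    using Qstar_add Qstar_mult_left Qhat_add[OF x] Qhat_mult_left[OF x]
    by (auto simp: Qstar_def bounded_linear.linear)
  moreover have "\<forall>u. l u = 0" if "l \<in> ?A" "\<forall>b\<in>B. l b = 0" for l
    using linear_eq_0_on_span[of l "W \<union> B"] that B(2) by (auto simp: Qstar_def bounded_linear.linear)
  ultimately have "\<exists>\<phi>. \<forall>l\<in>?A. l \<phi> = x l"
    by (rule dual_functional_is_evaluation[OF B(1)])
  then show ?thesis by blast
qed

lemma closed_fin_codim_kernel:
  assumes l: "bounded_linear l"
  shows "closed_fin_codim {w. l w = (0::real)}"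
  unfolding closed_fin_codim_def
proof (intro conjI)
  have lin: "linear l" using l by (rule bounded_linear.linear)
  show "subspace {w. l w = 0}" by (rule linear_subspace_kernel[OF lin])
  show "closed {w. l w = 0}"
    by (rule closed_Collect_eq) (auto intro: linear_continuous_on l)
  show "\<exists>B. finite B \<and> span ({w. l w = 0} \<union> B) = UNIV"
  proof (cases "\<forall>v. l v = 0")
    case True
    then show ?thesis by (intro exI[of _ "{}"]) simp
  next
    case False
    then obtain v where v: "l v \<noteq> 0" by blast
    have "\<phi> \<in> span ({w. l w = 0} \<union> {v})" for \<phi>
    proof -
      have "\<phi> - (l \<phi> / l v) *\<^sub>R v \<in> span ({w. l w = 0} \<union> {v})"
        using v lin by (intro span_base) (simp add: linear_diff linear_scale)
      moreover have "(l \<phi> / l v) *\<^sub>R v \<in> span ({w. l w = 0} \<union> {v})"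
        by (intro span_scale span_base) simp
      ultimately have "(\<phi> - (l \<phi> / l v) *\<^sub>R v) + (l \<phi> / l v) *\<^sub>R v \<in> span ({w. l w = 0} \<union> {v})"
        by (rule span_add)
      then show ?thesis by simp
    qed
    then show ?thesis by (intro exI[of _ "{v}"]) auto
  qed
qed

text \<open>The character \<open>exp (i l)\<close> is invariant under translations by a subspace \<open>W\<close> only if
  \<open>l\<close> vanishes on \<open>W\<close> (otherwise some \<open>t w\<close>, \<open>w \<in> W\<close>, has \<open>l (t w) = \<pi>\<close>); hence the
  canonical extension reads off \<open>x l\<close>.\<close>

lemma canon_ext_char:
  fixes l :: "'q::real_normed_vector \<Rightarrow> real"
  assumes l: "l \<in> Qstar" and x: "x \<in> Qhat"
  shows "canon_ext (\<lambda>\<phi>. exp (\<i> * complex_of_real (l \<phi>))) x = dual_char l x"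
proof -
  define f where "f = (\<lambda>\<phi>. exp (\<i> * complex_of_real (l \<phi>)))"
  have lin: "linear l" using l unfolding Qstar_def by (simp add: bounded_linear.linear)
  have "closed_fin_codim {w. l w = 0}"
    using l unfolding Qstar_def by (simp add: closed_fin_codim_kernel)
  moreover have "transl_invariant f {w. l w = 0}"
    unfolding transl_invariant_def f_def using lin by (simp add: linear_add)
  ultimately have "\<exists>W. closed_fin_codim W \<and> transl_invariant f W" by blast
  define W where "W = (SOME W. closed_fin_codim W \<and> transl_invariant f W)"
  have W: "closed_fin_codim W" "transl_invariant f W"
    using someI_ex[OF \<open>\<exists>W. closed_fin_codim W \<and> transl_invariant f W\<close>] unfolding W_def by simp_all
  have annihilates: "l w = 0" if w: "w \<in> W" for w
  proof (rule ccontr)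
    assume nz: "l w \<noteq> 0"
    have "(pi / l w) *\<^sub>R w \<in> W"
      using W(1) w unfolding closed_fin_codim_def by (simp add: subspace_scale)
    then have "f (0 + (pi / l w) *\<^sub>R w) = f 0"
      using W(2) unfolding transl_invariant_def by blast
    moreover have "l ((pi / l w) *\<^sub>R w) = pi" "l 0 = 0"
      using nz lin by (simp_all add: linear_scale linear_0)
    ultimately have "exp (\<i> * complex_of_real pi) = 1" unfolding f_def by simp
    then show False by simp
  qed
  define \<phi>0 where "\<phi>0 = (SOME \<phi>. \<forall>l'\<in>Qstar. (\<forall>w\<in>W. l' w = 0) \<longrightarrow> l' \<phi> = x l')"
  have "\<forall>l'\<in>Qstar. (\<forall>w\<in>W. l' w = 0) \<longrightarrow> l' \<phi>0 = x l'"
    unfolding \<phi>0_def by (rule someI_ex[OF Qhat_evaluation_on_annihilator[OF W(1) x]])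
  then have "l \<phi>0 = x l" using l annihilates by blast
  moreover have "canon_ext f x = f \<phi>0"
    unfolding canon_ext_def Let_def W_def[symmetric] \<phi>0_def ..
  ultimately show ?thesis unfolding f_def dual_char_def by simp
qed

section \<open>The functions \<open>k\<^sup>S\<close>\<close>

lemma kS_Mspace:
  assumes q_ker: "\<forall>\<tau>. q \<tau> = 0 \<longleftrightarrow> \<tau> \<in> Mspace br"
    and \<Omega>_lin: "\<forall>\<phi>. linear (\<Omega> \<phi>)" and \<Omega>_sym: "\<forall>\<phi> \<phi>'. \<Omega> \<phi> \<phi>' = \<Omega> \<phi>' \<phi>"
    and m: "m \<in> Mspace br"
  shows "kS br q \<Omega> m = (\<lambda>\<phi>. exp (\<i> * complex_of_real (brQ br q m \<phi>)))"
proof -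
  have "\<Omega> 0 \<phi> = 0" for \<phi>
  proof -
    have "\<Omega> 0 \<phi> = \<Omega> \<phi> 0" using \<Omega>_sym by blast
    also have "\<dots> = 0" using \<Omega>_lin linear_0 by blast
    finally show ?thesis .
  qed
  moreover have "q m = 0" "br m m = 0" using q_ker m unfolding Mspace_def by auto
  ultimately show ?thesis unfolding kS_def by simp
qed

lemma brQ_add_Nspace:
  assumes "bilinear br" "n \<in> Nspace br"
  shows "brQ br q (m + n) = brQ br q m"
proof -
  have "br (m + n) \<tau> = br m \<tau>" for \<tau>
  proof -
    have "linear (\<lambda>\<xi>. br \<xi> \<tau>)" using assms(1) unfolding bilinear_def by simp
    from linear_add[OF this, of m n] show ?thesis using assms(2) unfolding Nspace_def by simp
  qed
  then show ?thesis by (simp add: brQ_def fun_eq_iff)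
qed

lemma dual_trig_poly_kS_combination:
  assumes bil: "bilinear br"
    and dsum: "\<forall>\<xi>. \<exists>m\<in>Mspace br. \<exists>n\<in>Nspace br. \<xi> = m + n"
    and q_ker: "\<forall>\<tau>. q \<tau> = 0 \<longleftrightarrow> \<tau> \<in> Mspace br"
    and \<Omega>_lin: "\<forall>\<phi>. linear (\<Omega> \<phi>)" and \<Omega>_sym: "\<forall>\<phi> \<phi>'. \<Omega> \<phi> \<phi>' = \<Omega> \<phi>' \<phi>"
    and br_onto: "\<forall>l::'q::real_normed_vector \<Rightarrow> real. bounded_linear l \<longrightarrow> (\<exists>\<xi>. l = brQ br q \<xi>)"
    and P: "dual_trig_poly P"
  shows "\<exists>T c. finite T \<and> (\<forall>x\<in>Qhat. P x = (\<Sum>\<tau>\<in>T. c \<tau> * canon_ext (kS br q \<Omega> \<tau>) x))"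
proof -
  obtain S c where S: "finite S" "S \<subseteq> Qstar" "\<And>x. x \<in> Qhat \<Longrightarrow> P x = (\<Sum>l\<in>S. c l * dual_char l x)"
    using P unfolding lincomb_on_def by blast
  have "\<exists>m. m \<in> Mspace br \<and> brQ br q m = l" if l: "l \<in> S" for l
  proof -
    obtain \<xi> where \<xi>: "l = brQ br q \<xi>" using br_onto S(2) l unfolding Qstar_def by blast
    obtain m n where mn: "m \<in> Mspace br" "n \<in> Nspace br" "\<xi> = m + n" using dsum by blast
    have "brQ br q m = l" using \<xi> mn(3) brQ_add_Nspace[OF bil mn(2), of q m] by simp
    with mn(1) show ?thesis by blast
  qed
  then have "\<forall>l\<in>S. \<exists>m. m \<in> Mspace br \<and> brQ br q m = l" by blast
  from bchoice[OF this] obtain m where "\<forall>l\<in>S. m l \<in> Mspace br \<and> brQ br q (m l) = l" by blast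
  then have m: "\<And>l. l \<in> S \<Longrightarrow> m l \<in> Mspace br" "\<And>l. l \<in> S \<Longrightarrow> brQ br q (m l) = l" by simp_all
  have inj: "inj_on m S"
    by (rule inj_on_inverseI[where g="brQ br q"]) (rule m(2))
  have kS_m: "canon_ext (kS br q \<Omega> (m l)) x = dual_char l x" if "l \<in> S" "x \<in> Qhat" for l x
    using kS_Mspace[OF q_ker \<Omega>_lin \<Omega>_sym m(1)[OF that(1)]] m(2)[OF that(1)]
      canon_ext_char[of l x] S(2) that by auto
  have "P x = (\<Sum>\<tau>\<in>m ` S. c (brQ br q \<tau>) * canon_ext (kS br q \<Omega> \<tau>) x)" if "x \<in> Qhat" for x
    unfolding S(3)[OF that] sum.reindex[OF inj] comp_def
    by (intro sum.cong refl) (simp add: m(2) kS_m that)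
  then show ?thesis
    using S(1) by (intro exI[of _ "m ` S"] exI[of _ "\<lambda>\<tau>. c (brQ br q \<tau>)"]) simp
qed

theorem proposition3p4:
  fixes br :: "'l::real_vector \<Rightarrow> 'l \<Rightarrow> real"
    and q :: "'l \<Rightarrow> 'q::{real_inner, polish_space}"
    and \<Omega> :: "'q \<Rightarrow> 'q \<Rightarrow> complex"
    and \<nu> :: "(('q \<Rightarrow> real) \<Rightarrow> real) measure"
  assumes bil: "bilinear br"
    and nondeg: "\<forall>\<xi>. (\<forall>\<xi>'. omegaF br \<xi> \<xi>' = 0) \<longrightarrow> \<xi> = 0"
    and dsum: "Mspace br \<inter> Nspace br = {0}"
              "\<forall>\<xi>. \<exists>m\<in>Mspace br. \<exists>n\<in>Nspace br. \<xi> = m + n"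
    and q_lin: "linear q" and q_surj: "surj q"
    and q_ker: "\<forall>\<tau>. q \<tau> = 0 \<longleftrightarrow> \<tau> \<in> Mspace br"
    and \<Omega>_lin: "\<forall>\<phi>. linear (\<Omega> \<phi>)"
    and \<Omega>_sym: "\<forall>\<phi> \<phi>'. \<Omega> \<phi> \<phi>' = \<Omega> \<phi>' \<phi>"
    and \<Omega>_pos: "\<forall>\<phi>. \<phi> \<noteq> 0 \<longrightarrow> Re (\<Omega> \<phi> \<phi>) > 0"
    and \<Omega>_inner: "\<forall>\<phi> \<phi>'. Re (\<Omega> \<phi> \<phi>') = inner \<phi> \<phi>'"
    and Im_cont: "continuous_on UNIV (\<lambda>p. Im (\<Omega> (fst p) (snd p)))"
    and br_cont: "\<forall>\<xi>. continuous_on UNIV (brQ br q \<xi>)"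
    and br_onto: "\<forall>l::'q \<Rightarrow> real. bounded_linear l \<longrightarrow> (\<exists>\<xi>. l = brQ br q \<xi>)"
    and \<nu>_space: "space \<nu> = Qhat"
    and \<nu>_sets: "sets \<nu> = Qhat_sets"
    and \<nu>_prob: "prob_space \<nu>"
    and \<nu>_gauss: "\<forall>l\<in>Qstar. (\<integral>x. exp (\<i> * complex_of_real (x l)) \<partial>\<nu>)
                     = complex_of_real (exp (- (1/4) * (onorm l)\<^sup>2))"
  shows "\<forall>f :: (('q \<Rightarrow> real) \<Rightarrow> real) \<Rightarrow> complex.
           f \<in> borel_measurable \<nu> \<and> integrable \<nu> (\<lambda>x. (cmod (f x))\<^sup>2) \<longrightarrow>
           (\<forall>\<epsilon>>0. \<exists>T c. finite T \<and>
              integrable \<nu> (\<lambda>x. (cmod (f x - (\<Sum>\<tau>\<in>T. c \<tau> * canon_ext (kS br q \<Omega> \<tau>) x)))\<^sup>2) \<and>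
              (\<integral>x. (cmod (f x - (\<Sum>\<tau>\<in>T. c \<tau> * canon_ext (kS br q \<Omega> \<tau>) x)))\<^sup>2 \<partial>\<nu>) < \<epsilon>)"
proof (intro allI impI)
  interpret cylinder_measure \<nu>
    by (intro cylinder_measure.intro cylinder_measure_axioms.intro prob_space.finite_measure
        \<nu>_prob \<nu>_space \<nu>_sets)
  fix f :: "(('q \<Rightarrow> real) \<Rightarrow> real) \<Rightarrow> complex" and \<epsilon> :: real
  assume "f \<in> borel_measurable \<nu> \<and> integrable \<nu> (\<lambda>x. (cmod (f x))\<^sup>2)" and "\<epsilon> > 0"
  then show "\<exists>T c. finite T \<and>
      integrable \<nu> (\<lambda>x. (cmod (f x - (\<Sum>\<tau>\<in>T. c \<tau> * canon_ext (kS br q \<Omega> \<tau>) x)))\<^sup>2) \<and>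
      (\<integral>x. (cmod (f x - (\<Sum>\<tau>\<in>T. c \<tau> * canon_ext (kS br q \<Omega> \<tau>) x)))\<^sup>2 \<partial>\<nu>) < \<epsilon>"
    using dual_trig_poly_kS_combination[OF bil dsum(2) q_ker \<Omega>_lin \<Omega>_sym br_onto]
    by (intro approximation_by_spanning_family) (simp_all add: square_integrable_def)
qed

end
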